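(* Let $(X,C)$ be a convexity space (not necessarily separable or compact) and let $\varepsilon>0$. If the Radon number of $(X,C)$ is greater than $r>0$, then there is a probability distribution $\mu$ on $X$ such that every weak $\varepsilon$-net for $C$ over $\mu$ has size at least $(1-2\varepsilon)r$.
   Context: A convexity space is a pair $(X,C)$ with $C\subseteq 2^X$ such that $\emptyset, X\in C$ and $C$ is closed under arbitrary intersections. The convex hull $conv(Y)$ is the intersection of all $c\in C$ containing $Y$. $C$ Radon-shatters $Y\subseteq X$ if for every partition $Y=Y_1\sqcup Y_2$, $conv(Y_1)\cap conv(Y_2)=\emptyset$; the Radon number is the minimum $r$ such that no set of size $r$ is Radon-shattered. A weak $\varepsilon$-net for $C$ over $\mu$ is a set $S\subseteq X$ meeting every $c\in C$ with $\mu(c)\ge\varepsilon$. *)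

theory Defs
  imports "HOL-Probability.Probability"
begin

definition convexity_space :: "'a set \<Rightarrow> 'a set set \<Rightarrow> bool" where
  "convexity_space X C \<longleftrightarrow> C \<subseteq> Pow X \<and> {} \<in> C \<and> X \<in> C \<and>
     (\<forall>D. D \<subseteq> C \<and> D \<noteq> {} \<longrightarrow> \<Inter>D \<in> C)"

definition conv_hull :: "'a set set \<Rightarrow> 'a set \<Rightarrow> 'a set" where
  "conv_hull C Y = \<Inter>{c \<in> C. Y \<subseteq> c}"

definition radon_shatters :: "'a set set \<Rightarrow> 'a set \<Rightarrow> bool" where
  "radon_shatters C Y \<longleftrightarrow>
     (\<forall>Y1 Y2. Y1 \<union> Y2 = Y \<and> Y1 \<inter> Y2 = {} \<longrightarrow> conv_hull C Y1 \<inter> conv_hull C Y2 = {})"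

definition radon_number :: "'a set \<Rightarrow> 'a set set \<Rightarrow> enat" where
  "radon_number X C = Inf {enat r | r. \<not> (\<exists>Y. Y \<subseteq> X \<and> finite Y \<and> card Y = r \<and> radon_shatters C Y)}"

definition weak_eps_net :: "'a set set \<Rightarrow> 'a measure \<Rightarrow> real \<Rightarrow> 'a set \<Rightarrow> bool" where
  "weak_eps_net C M \<epsilon> S \<longleftrightarrow> (\<forall>c\<in>C. measure M c \<ge> \<epsilon> \<longrightarrow> S \<inter> c \<noteq> {})"

end

(*
  The uniform distribution on a Radon-shattered set Y of size r works. Colour every
  subset A of Y of size k = ceil(eps r) by a point of the net lying in conv A, which exists
  because conv A meets Y exactly in A and so has measure k/r >= eps. Radon-shattering makes
  any two sets of the same colour intersect, so this properly colours the Kneser graph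
  KG(r, k), and Lovasz's theorem yields |S| >= r - 2k + 2 > (1 - 2 eps) r.

  Lovasz's theorem follows from the octahedral Tucker lemma through Matousek's labelling.
  Tucker's lemma is proved by the parity argument of Freund and Todd: in dimension k the rooms
  are the signed permutations whose coordinate k-1 is positive, and their doors are the facets
  carrying distinct alternating labels. Flipping pairs up all doors except those on the
  boundary, which correspond to fully labelled alternating chains in dimension k-1; a room has
  an odd number of doors iff it is fully labelled and alternating up to sign. Hence the number
  of fully labelled alternating chains is odd in every dimension up to n, and a fully
  labelled chain in dimension n needs n distinct absolute values among the labels.
*)

theory Submission
  imports Defs
begin

section \<open>Parity of alternating facets\<close>

definition threshold_points :: "('a \<Rightarrow> 'b::linorder) \<Rightarrow> ('a \<Rightarrow> bool) \<Rightarrow> 'a set \<Rightarrow> 'a set" where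
  "threshold_points h G L = {a\<in>L. \<forall>b\<in>L. (h a < h b \<longrightarrow> G b) \<and> (h b < h a \<longrightarrow> \<not> G b)}"

lemma threshold_points_insert_max:
  assumes "\<And>b. b \<in> S \<Longrightarrow> h b < h x"
  shows "threshold_points h G (insert x S) =
    (if G x then threshold_points h G S else {}) \<union> (if \<forall>b\<in>S. \<not> G b then {x} else {})"
  using assms unfolding threshold_points_def by (auto dest: less_asym)

lemma odd_card_threshold_points_iff:
  fixes h :: "'a \<Rightarrow> 'b::linorder"
  assumes "finite L" "L \<noteq> {}" "inj_on h L"
  shows "odd (card (threshold_points h G L)) \<longleftrightarrow> (\<forall>b\<in>L. G b) \<or> (\<forall>b\<in>L. \<not> G b)"
  using assms
proof (induction L rule: finite_ranking_induct[where f = h])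
  case empty
  then show ?case by blast
next
  case (insert x S)
  show ?case
  proof (cases "x \<in> S")
    case True
    then show ?thesis using insert.IH insert.prems by (simp add: insert_absorb)
  next
    case xS: False
    show ?thesis
    proof (cases "S = {}")
      case True
      have "threshold_points h G {x} = {x}" by (auto simp: threshold_points_def)
      then show ?thesis using True by simp
    next
      case False
      have below: "h b < h x" if "b \<in> S" for b
      proof -
        have "h b \<noteq> h x" using insert.prems(2) that xS by (auto simp: inj_on_def)
        then show ?thesis using insert.hyps(2)[OF that] by simp
      qed
      have IH: "odd (card (threshold_points h G S)) \<longleftrightarrow> (\<forall>b\<in>S. G b) \<or> (\<forall>b\<in>S. \<not> G b)"
        using insert.IH False xS insert.prems(2) by simp
      have "x \<notin> threshold_points h G S" "finite (threshold_points h G S)"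
        using xS insert.hyps(1) by (auto simp: threshold_points_def)
      moreover have "threshold_points h G (insert x S) =
          (if G x then threshold_points h G S else {}) \<union> (if \<forall>b\<in>S. \<not> G b then {x} else {})"
        using below by (rule threshold_points_insert_max)
      ultimately show ?thesis using IH False by auto
    qed
  qed
qed

lemma even_card_involution:
  assumes "finite S" "\<And>x. x \<in> S \<Longrightarrow> f x \<in> S" "\<And>x. x \<in> S \<Longrightarrow> f (f x) = x"
    "\<And>x. x \<in> S \<Longrightarrow> f x \<noteq> x"
  shows "even (card S)"
  using assms
proof (induction S rule: finite_psubset_induct)
  case (psubset A)
  show ?case
  proof (cases "A = {}")
    case False
    then obtain x where x: "x \<in> A" by auto
    have "f x \<noteq> x" using psubset.prems(3) x by blast
    then have pair: "{x, f x} \<subseteq> A" "card {x, f x} = 2"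
      using x psubset.prems(1) by auto
    have "even (card (A - {x, f x}))"
    proof (rule psubset.IH)
      fix y assume "y \<in> A - {x, f x}"
      then show "f y \<in> A - {x, f x}" "f (f y) = y" "f y \<noteq> y"
        using x psubset.prems by (metis Diff_iff insertCI insertE singletonD)+
    qed (use x in auto)
    moreover have "card (A - {x, f x}) + 2 = card A"
      using pair card_mono[OF psubset.hyps pair(1)] by (simp add: card_Diff_subset)
    ultimately show ?thesis by (metis even_add even_numeral)
  qed simp
qed

definition rank_above :: "int set \<Rightarrow> int \<Rightarrow> nat" where
  "rank_above L l = card {l'\<in>L. \<bar>l\<bar> < \<bar>l'\<bar>}"

text \<open>A set of labels is alternating if, listed by decreasing absolute value, its signs
  alternate starting with a positive one.\<close>
definition alternating :: "int set \<Rightarrow> bool" where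
  "alternating L \<longleftrightarrow> (\<forall>l\<in>L. (0 < l \<longleftrightarrow> even (rank_above L l)))"

lemma even_rank_above_remove:
  assumes "finite L" "l0 \<in> L" "b \<noteq> l0"
  shows "even (rank_above (L - {l0}) b) \<longleftrightarrow> (\<bar>b\<bar> < \<bar>l0\<bar> \<longleftrightarrow> odd (rank_above L b))"
proof -
  define A where "A = {l'\<in>L. \<bar>b\<bar> < \<bar>l'\<bar>}"
  have e: "{l'\<in>L - {l0}. \<bar>b\<bar> < \<bar>l'\<bar>} = A - {l0}" unfolding A_def by blast
  show ?thesis
  proof (cases "\<bar>b\<bar> < \<bar>l0\<bar>")
    case True
    then have "l0 \<in> A" "finite A" using assms(1,2) by (simp_all add: A_def)
    then have "card A = Suc (card (A - {l0}))"
      by (metis card_Suc_Diff1)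
    then show ?thesis unfolding rank_above_def e A_def[symmetric] using True by simp
  next
    case False
    then have "A - {l0} = A" unfolding A_def by auto
    then show ?thesis unfolding rank_above_def e A_def[symmetric] using False by simp
  qed
qed

lemma alternating_remove_iff:
  assumes "finite L" "inj_on abs L" "l \<in> L"
  shows "alternating (L - {l}) \<longleftrightarrow>
    (\<forall>b\<in>L. (\<bar>l\<bar> < \<bar>b\<bar> \<longrightarrow> (0 < b \<longleftrightarrow> even (rank_above L b))) \<and>
           (\<bar>b\<bar> < \<bar>l\<bar> \<longrightarrow> \<not> (0 < b \<longleftrightarrow> even (rank_above L b))))"
proof -
  have "alternating (L - {l}) \<longleftrightarrow>
      (\<forall>b\<in>L. b \<noteq> l \<longrightarrow> (0 < b \<longleftrightarrow> even (rank_above (L - {l}) b)))"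
    unfolding alternating_def Ball_def Diff_iff singleton_iff imp_conjL ..
  also have "\<dots> \<longleftrightarrow> (\<forall>b\<in>L. (\<bar>l\<bar> < \<bar>b\<bar> \<longrightarrow> (0 < b \<longleftrightarrow> even (rank_above L b))) \<and>
           (\<bar>b\<bar> < \<bar>l\<bar> \<longrightarrow> \<not> (0 < b \<longleftrightarrow> even (rank_above L b))))"
  proof (rule ball_cong)
    fix b assume b: "b \<in> L"
    show "(b \<noteq> l \<longrightarrow> (0 < b \<longleftrightarrow> even (rank_above (L - {l}) b))) \<longleftrightarrow>
      (\<bar>l\<bar> < \<bar>b\<bar> \<longrightarrow> (0 < b \<longleftrightarrow> even (rank_above L b))) \<and>
      (\<bar>b\<bar> < \<bar>l\<bar> \<longrightarrow> \<not> (0 < b \<longleftrightarrow> even (rank_above L b)))"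
    proof (cases "b = l")
      case False
      then have "\<bar>b\<bar> \<noteq> \<bar>l\<bar>" using assms(2,3) b unfolding inj_on_def by blast
      then consider "\<bar>b\<bar> < \<bar>l\<bar>" | "\<bar>l\<bar> < \<bar>b\<bar>" by linarith
      then show ?thesis using even_rank_above_remove[OF assms(1,3) False] False
        by cases simp_all
    qed simp
  qed simp
  finally show ?thesis .
qed

lemma rank_above_uminus: "l \<in> L \<Longrightarrow> rank_above (uminus ` L) (- l) = rank_above L l"
proof -
  have "{l'\<in>uminus ` L. \<bar>- l\<bar> < \<bar>l'\<bar>} = uminus ` {l'\<in>L. \<bar>l\<bar> < \<bar>l'\<bar>}" by force
  then show "rank_above (uminus ` L) (- l) = rank_above L l"
    unfolding rank_above_def by (simp add: card_image)
qed

lemma alternating_uminus: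
  assumes "0 \<notin> L"
  shows "alternating (uminus ` L) \<longleftrightarrow> (\<forall>b\<in>L. \<not> (0 < b \<longleftrightarrow> even (rank_above L b)))"
proof -
  have "0 < - b \<longleftrightarrow> \<not> 0 < b" if "b \<in> L" for b :: int
    using assms that by (cases "b = 0") auto
  then show ?thesis
    unfolding alternating_def by (auto simp: rank_above_uminus)
qed

lemma odd_card_alternating_facets_iff:
  assumes "finite L" "L \<noteq> {}" "0 \<notin> L" "inj_on abs L"
  shows "odd (card {l\<in>L. alternating (L - {l})}) \<longleftrightarrow> alternating L \<or> alternating (uminus ` L)"
proof -
  have facets: "{l\<in>L. alternating (L - {l})} =
      threshold_points abs (\<lambda>b. 0 < b \<longleftrightarrow> even (rank_above L b)) L"
    using alternating_remove_iff[OF assms(1,4)] by (auto simp: threshold_points_def)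
  show ?thesis
    unfolding facets odd_card_threshold_points_iff[OF assms(1,2,4)] alternating_uminus[OF assms(3)]
    by (simp add: alternating_def)
qed

lemma not_alternating_both_signs:
  assumes "finite L" "L \<noteq> {}" "0 \<notin> L"
  shows "\<not> (alternating L \<and> alternating (uminus ` L))"
proof -
  have "Max (abs ` L) \<in> abs ` L" using assms(1,2) by simp
  then obtain l where l: "l \<in> L" "\<bar>l\<bar> = Max (abs ` L)" by (metis imageE)
  then have "\<forall>l'\<in>L. \<bar>l'\<bar> \<le> \<bar>l\<bar>" using assms(1) by simp
  then have "rank_above L l = 0" using assms(1) unfolding rank_above_def by (auto simp: not_less)
  then show ?thesis using alternating_uminus[OF assms(3)] l(1) assms(3) unfolding alternating_def
    by (metis even_zero less_linear)
qed

definition alternating_facets :: "('a \<Rightarrow> int) \<Rightarrow> 'a set \<Rightarrow> 'a set" where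
  "alternating_facets h K =
    {j\<in>K. card (h ` (K - {j})) = card K - 1 \<and> alternating (h ` (K - {j}))}"

lemma mem_alternating_facets_iff:
  assumes "finite K"
  shows "j \<in> alternating_facets h K \<longleftrightarrow>
    j \<in> K \<and> inj_on h (K - {j}) \<and> alternating (h ` (K - {j}))"
proof -
  have "card (K - {j}) = card K - 1" if "j \<in> K" using assms that by simp
  then show ?thesis
    unfolding alternating_facets_def using assms by (auto simp: inj_on_iff_eq_card)
qed

lemma finite_alternating_facets: "finite K \<Longrightarrow> finite (alternating_facets h K)"
  unfolding alternating_facets_def by simp

lemma alternating_facets_cong:
  assumes "\<And>i. i \<in> K - {j} \<Longrightarrow> h' i = h i"
  shows "j \<in> alternating_facets h' K \<longleftrightarrow> j \<in> alternating_facets h K"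
proof -
  have "h' ` (K - {j}) = h ` (K - {j})" using assms by (rule image_cong[OF refl])
  then show ?thesis unfolding alternating_facets_def by simp
qed

lemma odd_card_alternating_facets_inj:
  assumes "finite K" "K \<noteq> {}" "inj_on h K" "0 \<notin> h ` K" "inj_on abs (h ` K)"
  shows "odd (card (alternating_facets h K)) \<longleftrightarrow>
    alternating (h ` K) \<or> alternating (uminus ` h ` K)"
proof -
  have "alternating_facets h K = {j\<in>K. alternating (h ` K - {h j})}"
    using assms(1,3) by (auto simp: mem_alternating_facets_iff inj_on_image_set_diff
        intro: inj_on_subset)
  moreover have "h ` {j\<in>K. alternating (h ` K - {h j})} = {l\<in>h ` K. alternating (h ` K - {l})}"
    by auto
  moreover have "inj_on h {j\<in>K. alternating (h ` K - {h j})}"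
    using assms(3) by (rule inj_on_subset) auto
  ultimately have "card (alternating_facets h K) = card {l\<in>h ` K. alternating (h ` K - {l})}"
    by (metis card_image)
  then show ?thesis using odd_card_alternating_facets_iff[of "h ` K"] assms by simp
qed

text \<open>If two vertices carry the same label, only the two facets omitting one of them can
  be injectively labelled.\<close>
lemma even_card_alternating_facets_not_inj:
  assumes "finite K" "\<not> inj_on h K"
  shows "even (card (alternating_facets h K))"
proof (cases "alternating_facets h K = {}")
  case False
  then obtain j where j: "j \<in> alternating_facets h K" by blast
  then have jK: "j \<in> K" and inj: "inj_on h (K - {j})"
    using assms(1) by (auto simp: mem_alternating_facets_iff)
  have "K = insert j (K - {j})" using jK by blast
  then have "h j \<in> h ` (K - {j})" using assms(2) inj by (metis Diff_idemp inj_on_insert)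
  then obtain j' where j': "j' \<in> K" "j' \<noteq> j" "h j' = h j" by (metis DiffE imageE singletonI)
  have "alternating_facets h K \<subseteq> {j, j'}"
  proof
    fix x assume "x \<in> alternating_facets h K"
    then have "x \<in> K" "inj_on h (K - {x})" using assms(1) by (auto simp: mem_alternating_facets_iff)
    then show "x \<in> {j, j'}" using jK j' unfolding inj_on_def by blast
  qed
  moreover have "j' \<in> alternating_facets h K"
  proof -
    have "K - {j'} = insert j (K - {j, j'})" "K - {j} = insert j' (K - {j, j'})"
      using jK j' by auto
    then have "h ` (K - {j'}) = h ` (K - {j})" using j' by simp
    then show ?thesis using j j' unfolding alternating_facets_def by simp
  qed
  ultimately have "alternating_facets h K = {j, j'}" using j by blast
  then show ?thesis using j' by simp
qed simp

section \<open>The octahedral Tucker lemma\<close>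

text \<open>The pairs \<open>(i, True)\<close> and \<open>(i, False)\<close> stand for the vertices \<open>e\<^sub>i\<close> and \<open>-e\<^sub>i\<close> of the
  cross-polytope in \<open>\<real>\<^sup>n\<close>, so the signed sets are the faces of its boundary, i.e.\ the vertices
  of its barycentric subdivision. A signed permutation of length \<open>k\<close> encodes the chain of its
  prefix sets, a maximal simplex of the subdivided boundary of the \<open>k\<close>-dimensional
  cross-polytope.\<close>

definition signed_set :: "nat \<Rightarrow> (nat \<times> bool) set \<Rightarrow> bool" where
  "signed_set n x \<longleftrightarrow> x \<noteq> {} \<and> fst ` x \<subseteq> {..<n} \<and> (\<forall>i. \<not> ((i,True) \<in> x \<and> (i,False) \<in> x))"

definition neg_signs :: "(nat \<times> bool) set \<Rightarrow> (nat \<times> bool) set" where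
  "neg_signs x = (\<lambda>p. (fst p, \<not> snd p)) ` x"

definition pos_part :: "(nat \<times> bool) set \<Rightarrow> nat set" where
  "pos_part x = {i. (i, True) \<in> x}"

definition neg_part :: "(nat \<times> bool) set \<Rightarrow> nat set" where
  "neg_part x = {i. (i, False) \<in> x}"

definition signed_perms :: "nat \<Rightarrow> (nat \<times> bool) list set" where
  "signed_perms k = {w. length w = k \<and> distinct (map fst w) \<and> fst ` set w = {..<k}}"

definition prefix_set :: "(nat \<times> bool) list \<Rightarrow> nat \<Rightarrow> (nat \<times> bool) set" where
  "prefix_set w i = set (take i w)"

definition neg_word :: "(nat \<times> bool) list \<Rightarrow> (nat \<times> bool) list" where
  "neg_word w = map (\<lambda>p. (fst p, \<not> snd p)) w"

lemma mem_neg_signs: "(a, b) \<in> neg_signs x \<longleftrightarrow> (a, \<not> b) \<in> x"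
  unfolding neg_signs_def by force

lemma card_neg_signs [simp]: "card (neg_signs x) = card x"
  unfolding neg_signs_def by (simp add: card_image inj_on_def prod_eq_iff)

lemma fst_neg_signs [simp]: "fst ` neg_signs x = fst ` x"
  unfolding neg_signs_def by force

lemma pos_part_neg_signs [simp]: "pos_part (neg_signs x) = neg_part x"
  and neg_part_neg_signs [simp]: "neg_part (neg_signs x) = pos_part x"
  unfolding pos_part_def neg_part_def by (simp_all add: mem_neg_signs)

lemma signed_set_finite:
  assumes "signed_set n x"
  shows "finite x"
proof -
  have "x \<subseteq> {..<n} \<times> (UNIV :: bool set)" using assms unfolding signed_set_def by force
  then show ?thesis by (rule finite_subset) simp
qed

lemma signed_set_card_split:
  assumes "signed_set n x"
  shows "card x = card (pos_part x) + card (neg_part x)"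
    and "pos_part x \<inter> neg_part x = {}" "pos_part x \<subseteq> {..<n}" "neg_part x \<subseteq> {..<n}"
proof -
  have x: "x = (\<lambda>i. (i, True)) ` pos_part x \<union> (\<lambda>i. (i, False)) ` neg_part x"
  proof (rule set_eqI)
    fix p :: "nat \<times> bool"
    obtain i b where "p = (i, b)" by fastforce
    then show "p \<in> x \<longleftrightarrow> p \<in> (\<lambda>i. (i, True)) ` pos_part x \<union> (\<lambda>i. (i, False)) ` neg_part x"
      unfolding pos_part_def neg_part_def by (cases b) auto
  qed
  have "finite x" using signed_set_finite[OF assms] .
  then have "finite (pos_part x)" "finite (neg_part x)"
    by (subst (asm) x, simp add: finite_image_iff inj_on_def)+
  then show "card x = card (pos_part x) + card (neg_part x)"
    by (subst x, subst card_Un_disjoint) (auto simp: card_image inj_on_def)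
  show "pos_part x \<inter> neg_part x = {}" "pos_part x \<subseteq> {..<n}" "neg_part x \<subseteq> {..<n}"
    using assms unfolding signed_set_def pos_part_def neg_part_def by force+
qed

lemma finite_signed_perms: "finite (signed_perms k)"
proof -
  have "signed_perms k \<subseteq> {w. set w \<subseteq> {..<k} \<times> UNIV \<and> length w = k}"
    unfolding signed_perms_def by force
  moreover have "finite {w. set w \<subseteq> ({..<k} \<times> (UNIV::bool set)) \<and> length w = k}"
    by (intro finite_lists_length_eq) auto
  ultimately show ?thesis by (rule finite_subset)
qed

lemma distinct_map_fst_eq:
  assumes "distinct (map fst w)" "(a, b) \<in> set w" "(a, b') \<in> set w"
  shows "b = b'"
proof -
  have "inj_on fst (set w)" using assms(1) by (simp add: distinct_map)
  then show ?thesis using assms(2,3) unfolding inj_on_def by force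
qed

lemma signed_set_prefix_set:
  assumes "w \<in> signed_perms k" "k \<le> n" "1 \<le> i" "i \<le> k"
  shows "signed_set n (prefix_set w i)"
proof -
  have len: "length w = k" and d: "distinct (map fst w)" and f: "fst ` set w = {..<k}"
    using assms(1) unfolding signed_perms_def by auto
  have sub: "prefix_set w i \<subseteq> set w" unfolding prefix_set_def by (rule set_take_subset)
  have "prefix_set w i \<noteq> {}" using assms(3,4) len unfolding prefix_set_def by auto
  moreover have "fst ` prefix_set w i \<subseteq> {..<n}" using image_mono[OF sub, of fst] f assms(2) by auto
  moreover have "\<not> ((j,True) \<in> prefix_set w i \<and> (j,False) \<in> prefix_set w i)" for j
    using sub distinct_map_fst_eq[OF d, of j True False] by auto
  ultimately show ?thesis unfolding signed_set_def by blast
qed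

lemma prefix_set_mono: "i \<le> j \<Longrightarrow> prefix_set w i \<subseteq> prefix_set w j"
  unfolding prefix_set_def by (rule set_take_subset_set_take)

lemma prefix_set_append: "i \<le> length v \<Longrightarrow> prefix_set (v @ u) i = prefix_set v i"
  unfolding prefix_set_def by simp

lemma prefix_set_swap_adjacent:
  assumes "length xs = j - 1" "1 \<le> j" "i \<noteq> j"
  shows "prefix_set (xs @ b # a # ys) i = prefix_set (xs @ a # b # ys) i"
proof (cases "i < j")
  case False
  then have "length xs + 2 \<le> i" using assms by simp
  then obtain t where t: "i = length xs + 2 + t" by (metis le_add_diff_inverse)
  show ?thesis unfolding prefix_set_def t by auto
qed (use assms in \<open>simp add: prefix_set_def\<close>)

lemma neg_word_neg_word [simp]: "neg_word (neg_word w) = w"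
  unfolding neg_word_def by (induction w) auto

lemma neg_word_signed_perms: "w \<in> signed_perms k \<Longrightarrow> neg_word w \<in> signed_perms k"
  unfolding signed_perms_def neg_word_def by (simp add: image_image comp_def)

lemma prefix_set_neg_word: "prefix_set (neg_word w) i = neg_signs (prefix_set w i)"
  unfolding prefix_set_def neg_word_def neg_signs_def by (simp add: take_map)

lemma mem_neg_word: "(a, b) \<in> set (neg_word w) \<longleftrightarrow> (a, \<not> b) \<in> set w"
  unfolding neg_word_def by force

lemma snoc_signed_perms_iff:
  assumes "1 \<le> k"
  shows "v @ [(k - 1, s)] \<in> signed_perms k \<longleftrightarrow> v \<in> signed_perms (k - 1)"
proof
  have k: "{..<k} = insert (k - 1) {..<k - 1}" using assms by auto
  assume "v @ [(k - 1, s)] \<in> signed_perms k"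
  then have v: "length v = k - 1" "distinct (map fst v)" "k - 1 \<notin> fst ` set v"
    and "insert (k - 1) (fst ` set v) = insert (k - 1) {..<k - 1}"
    unfolding signed_perms_def k by auto
  then have "fst ` set v = {..<k - 1}"
    by (metis Diff_insert_absorb lessThan_iff less_irrefl)
  then show "v \<in> signed_perms (k - 1)" using v unfolding signed_perms_def by simp
next
  assume "v \<in> signed_perms (k - 1)"
  then show "v @ [(k - 1, s)] \<in> signed_perms k"
    using assms unfolding signed_perms_def by (auto simp: lessThan_Suc[symmetric])
qed

lemma signed_perms_butlast:
  assumes "w \<in> signed_perms k" "1 \<le> k"
  shows "w = take (k - 1) w @ [w ! (k - 1)]"
proof -
  have len: "length w = k" using assms(1) unfolding signed_perms_def by simp
  then have "take (Suc (k - 1)) w = take (k - 1) w @ [w ! (k - 1)]"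
    using assms(2) by (intro take_Suc_conv_app_nth) simp
  then show ?thesis using assms(2) len by simp
qed

definition rooms :: "nat \<Rightarrow> (nat \<times> bool) list set" where
  "rooms k = {w \<in> signed_perms k. (k - 1, True) \<in> set w}"

lemma neg_word_in_rooms_iff:
  assumes "w \<in> signed_perms k" "1 \<le> k"
  shows "neg_word w \<in> rooms k \<longleftrightarrow> (k - 1, True) \<notin> set w"
proof -
  have "k - 1 \<in> fst ` set w" and d: "distinct (map fst w)"
    using assms unfolding signed_perms_def by auto
  then obtain b where "(k - 1, b) \<in> set w" by force
  then have "(k - 1, True) \<in> set w \<or> (k - 1, False) \<in> set w" by (cases b) auto
  moreover have "\<not> ((k - 1, True) \<in> set w \<and> (k - 1, False) \<in> set w)"
    using distinct_map_fst_eq[OF d, of "k - 1" True False] by auto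
  ultimately have "(k - 1, False) \<in> set w \<longleftrightarrow> (k - 1, True) \<notin> set w" by blast
  then show ?thesis
    unfolding rooms_def using neg_word_signed_perms[OF assms(1)] by (simp add: mem_neg_word)
qed

text \<open>Flipping at \<open>j\<close> changes only the \<open>j\<close>-th prefix set, which is how doors are paired.\<close>
definition flip :: "(nat \<times> bool) list \<Rightarrow> nat \<Rightarrow> (nat \<times> bool) list" where
  "flip w j = (if j < length w then take (j - 1) w @ w ! j # w ! (j - 1) # drop (j + 1) w
             else take (j - 1) w @ [(fst (w ! (j - 1)), \<not> snd (w ! (j - 1)))])"

lemma flip_swap:
  assumes "length xs = j - 1" "1 \<le> j"
  shows "flip (xs @ a # b # ys) j = xs @ b # a # ys"
proof -
  have "j = Suc (length xs)" using assms by simp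
  then show ?thesis unfolding flip_def by (simp add: nth_append)
qed

lemma flip_last:
  assumes "length xs = k - 1" "1 \<le> k"
  shows "flip (xs @ [(c, e)]) k = xs @ [(c, \<not> e)]"
proof -
  have "k = Suc (length xs)" using assms by simp
  then show ?thesis unfolding flip_def by (simp add: nth_append)
qed

text \<open>The edges of the subdivided cross-polytope boundary are the inclusions \<open>x \<subseteq> y\<close>.\<close>
locale tucker_labelling =
  fixes n :: nat and M :: nat and lam :: "(nat \<times> bool) set \<Rightarrow> int"
  assumes antipodal: "\<And>x. signed_set n x \<Longrightarrow> lam (neg_signs x) = - lam x"
    and nonzero: "\<And>x. signed_set n x \<Longrightarrow> lam x \<noteq> 0"
    and bounded: "\<And>x. signed_set n x \<Longrightarrow> \<bar>lam x\<bar> \<le> int M"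
    and no_complementary_edge:
      "\<And>x y. signed_set n x \<Longrightarrow> signed_set n y \<Longrightarrow> x \<subseteq> y \<Longrightarrow> lam x \<noteq> - lam y"
begin

definition chain_label :: "(nat \<times> bool) list \<Rightarrow> nat \<Rightarrow> int" where
  "chain_label w i = lam (prefix_set w i)"

definition chain_labels :: "(nat \<times> bool) list \<Rightarrow> int set" where
  "chain_labels w = chain_label w ` {1..length w}"

definition doors :: "nat \<Rightarrow> ((nat \<times> bool) list \<times> nat) set" where
  "doors k = Sigma (rooms k) (\<lambda>w. alternating_facets (chain_label w) {1..k})"

definition boundary_doors :: "nat \<Rightarrow> ((nat \<times> bool) list \<times> nat) set" where
  "boundary_doors k = {(w, j) \<in> doors k. j = k \<and> w ! (k - 1) = (k - 1, True)}"

definition full_alt_count :: "nat \<Rightarrow> nat" where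
  "full_alt_count k =
    card {w \<in> signed_perms k. card (chain_labels w) = k \<and> alternating (chain_labels w)}"

lemma chain_labels_conv:
  "w \<in> signed_perms k \<Longrightarrow> chain_labels w = chain_label w ` {1..k}"
  unfolding chain_labels_def signed_perms_def by simp

lemma zero_notin_chain_labels:
  assumes "w \<in> signed_perms k" "k \<le> n"
  shows "0 \<notin> chain_labels w"
  using nonzero signed_set_prefix_set[OF assms]
  by (auto simp: chain_labels_conv[OF assms(1)] chain_label_def)

lemma inj_on_abs_chain_labels:
  assumes "w \<in> signed_perms k" "k \<le> n"
  shows "inj_on abs (chain_labels w)"
proof (rule inj_onI)
  fix a b assume "a \<in> chain_labels w" "b \<in> chain_labels w" and ab: "\<bar>a\<bar> = \<bar>b\<bar>"
  then obtain i j where ij: "i \<in> {1..k}" "j \<in> {1..k}" "a = lam (prefix_set w i)" "b = lam (prefix_set w j)"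
    unfolding chain_labels_conv[OF assms(1)] chain_label_def by auto
  have no_opposite: "lam (prefix_set w i) \<noteq> - lam (prefix_set w j)"
    if "i \<in> {1..k}" "j \<in> {1..k}" "i \<le> j" for i j
    using no_complementary_edge[OF signed_set_prefix_set[OF assms] signed_set_prefix_set[OF assms]
        prefix_set_mono[OF that(3)]] that by simp
  show "a = b"
  proof (rule ccontr)
    assume "a \<noteq> b"
    then have "a = - b" using ab by (auto simp: abs_if split: if_splits)
    then show False using no_opposite[of i j] no_opposite[of j i] ij by force
  qed
qed

lemma odd_card_alternating_facets_chain:
  assumes "w \<in> signed_perms k" "k \<le> n" "1 \<le> k"
  shows "odd (card (alternating_facets (chain_label w) {1..k})) \<longleftrightarrow>
    card (chain_labels w) = k \<and> (alternating (chain_labels w) \<or> alternating (uminus ` chain_labels w))"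
proof (cases "inj_on (chain_label w) {1..k}")
  case True
  then have "card (chain_labels w) = k" by (simp add: chain_labels_conv[OF assms(1)] card_image)
  then show ?thesis
    using odd_card_alternating_facets_inj[OF _ _ True] assms(3)
      zero_notin_chain_labels[OF assms(1,2)] inj_on_abs_chain_labels[OF assms(1,2)]
    by (simp add: chain_labels_conv[OF assms(1)])
next
  case False
  then have "card (chain_labels w) \<noteq> k"
    by (simp add: chain_labels_conv[OF assms(1)] inj_on_iff_eq_card)
  then show ?thesis using even_card_alternating_facets_not_inj[OF _ False] by simp
qed

lemma finite_doors: "finite (doors k)"
  unfolding doors_def rooms_def
  using finite_signed_perms by (intro finite_SigmaI) (auto simp: finite_alternating_facets)

lemma odd_card_doors_iff_rooms:
  assumes "1 \<le> k" "k \<le> n"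
  shows "odd (card (doors k)) \<longleftrightarrow>
    odd (card {w\<in>rooms k. card (chain_labels w) = k \<and>
      (alternating (chain_labels w) \<or> alternating (uminus ` chain_labels w))})"
proof -
  have fin: "finite (rooms k)" unfolding rooms_def using finite_signed_perms by simp
  have "card (doors k) = (\<Sum>w\<in>rooms k. card (alternating_facets (chain_label w) {1..k}))"
    unfolding doors_def using fin by (intro card_SigmaI) (auto simp: finite_alternating_facets)
  then have "odd (card (doors k)) \<longleftrightarrow>
      odd (card {w\<in>rooms k. odd (card (alternating_facets (chain_label w) {1..k}))})"
    using even_sum_iff[OF fin] by simp
  also have "{w\<in>rooms k. odd (card (alternating_facets (chain_label w) {1..k}))} =
      {w\<in>rooms k. card (chain_labels w) = k \<and>
        (alternating (chain_labels w) \<or> alternating (uminus ` chain_labels w))}"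
    using odd_card_alternating_facets_chain[OF _ assms(2,1)] unfolding rooms_def by auto
  finally show ?thesis .
qed

lemma mem_doors_iff:
  "(w, j) \<in> doors k \<longleftrightarrow> w \<in> rooms k \<and> j \<in> alternating_facets (chain_label w) {1..k}"
  unfolding doors_def by simp

lemma flip_swap_door:
  assumes door: "(xs @ a # b # ys, j) \<in> doors k - boundary_doors k"
    and xs: "length xs = j - 1" and j: "1 \<le> j" "j < k"
  shows "(xs @ b # a # ys, j) \<in> doors k - boundary_doors k \<and> a \<noteq> b"
proof -
  have room: "xs @ a # b # ys \<in> rooms k"
    and facet: "j \<in> alternating_facets (chain_label (xs @ a # b # ys)) {1..k}"
    using door by (auto simp: mem_doors_iff)
  then have "xs @ b # a # ys \<in> rooms k" and "a \<noteq> b"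
    by (auto simp: rooms_def signed_perms_def insert_commute)
  moreover have "j \<in> alternating_facets (chain_label (xs @ b # a # ys)) {1..k}"
    using facet alternating_facets_cong prefix_set_swap_adjacent[OF xs j(1)]
    by (metis chain_label_def DiffE singletonI)
  ultimately show ?thesis using j by (auto simp: mem_doors_iff boundary_doors_def)
qed

lemma flip_last_door:
  assumes door: "(xs @ [(c, e)], k) \<in> doors k - boundary_doors k"
    and xs: "length xs = k - 1" and k: "1 \<le> k"
  shows "(xs @ [(c, \<not> e)], k) \<in> doors k - boundary_doors k"
proof -
  have room: "xs @ [(c, e)] \<in> rooms k"
    and facet: "k \<in> alternating_facets (chain_label (xs @ [(c, e)])) {1..k}"
    and not_boundary: "(c, e) \<noteq> (k - 1, True)"
    using door xs by (auto simp: mem_doors_iff boundary_doors_def nth_append)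
  have distinct: "distinct (map fst (xs @ [(c, e)]))" and top: "(k - 1, True) \<in> set (xs @ [(c, e)])"
    using room unfolding rooms_def signed_perms_def by auto
  have "c \<noteq> k - 1"
    using not_boundary distinct_map_fst_eq[OF distinct, of c e True] top by auto
  then have "xs @ [(c, \<not> e)] \<in> rooms k"
    using room top by (auto simp: rooms_def signed_perms_def)
  moreover have "k \<in> alternating_facets (chain_label (xs @ [(c, \<not> e)])) {1..k}"
  proof (subst alternating_facets_cong)
    fix i assume "i \<in> {1..k} - {k}"
    then have "i \<le> length xs" using xs by auto
    then show "chain_label (xs @ [(c, \<not> e)]) i = chain_label (xs @ [(c, e)]) i"
      by (simp add: chain_label_def prefix_set_append)
  qed (rule facet)
  ultimately show ?thesis
    using \<open>c \<noteq> k - 1\<close> xs by (auto simp: mem_doors_iff boundary_doors_def nth_append)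
qed

lemma flip_door_involution:
  assumes door: "(w, j) \<in> doors k - boundary_doors k" and k: "1 \<le> k"
  shows "(flip w j, j) \<in> doors k - boundary_doors k \<and> flip (flip w j) j = w \<and> flip w j \<noteq> w"
proof -
  have "w \<in> signed_perms k" and j: "j \<in> {1..k}"
    using door by (auto simp: mem_doors_iff rooms_def alternating_facets_def)
  then have len: "length w = k" unfolding signed_perms_def by simp
  show ?thesis
  proof (cases "j < k")
    case True
    obtain xs a b ys where w: "w = xs @ a # b # ys" and xs: "length xs = j - 1"
    proof
      have "w = take (j - 1) w @ w ! (j - 1) # drop (Suc (j - 1)) w"
        using j len by (intro id_take_nth_drop) auto
      moreover have "drop (Suc (j - 1)) w = w ! j # drop (j + 1) w"
        using j True len by (simp add: Cons_nth_drop_Suc)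
      ultimately show "w = take (j - 1) w @ w ! (j - 1) # w ! j # drop (j + 1) w" by simp
    qed (use j True len in simp)
    show ?thesis
      using flip_swap_door[OF door[unfolded w] xs _ True] flip_swap[OF xs] j
      unfolding w by simp
  next
    case False
    then have jk: "j = k" using j by simp
    obtain xs c e where w: "w = xs @ [(c, e)]" and xs: "length xs = k - 1"
      using signed_perms_butlast[OF \<open>w \<in> signed_perms k\<close> k] len by (metis length_take min_absorb2 diff_le_self surj_pair)
    show ?thesis
      using flip_last_door[OF door[unfolded jk w] xs k] flip_last[OF xs k] unfolding jk w by simp
  qed
qed

lemma even_card_inner_doors:
  assumes "1 \<le> k"
  shows "even (card (doors k - boundary_doors k))"
proof (rule even_card_involution[where f = "\<lambda>(w, j). (flip w j, j)"])
  show "finite (doors k - boundary_doors k)" using finite_doors by simp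
qed (use flip_door_involution[OF _ assms] in auto)

lemma last_alternating_facet_iff:
  assumes "length v = k - 1" "1 \<le> k"
  shows "k \<in> alternating_facets (chain_label (v @ [x])) {1..k} \<longleftrightarrow>
    card (chain_labels v) = k - 1 \<and> alternating (chain_labels v)"
proof -
  have "{1..k} - {k} = {1..length v}" using assms by auto
  then have "chain_label (v @ [x]) ` ({1..k} - {k}) = chain_labels v"
    unfolding chain_labels_def by (auto simp: chain_label_def prefix_set_append)
  then show ?thesis unfolding alternating_facets_def using assms(2) by simp
qed

lemma card_boundary_doors:
  assumes "1 \<le> k"
  shows "card (boundary_doors k) = full_alt_count (k - 1)"
proof -
  define V where "V = {v \<in> signed_perms (k - 1). card (chain_labels v) = k - 1 \<and> alternating (chain_labels v)}"
  have "boundary_doors k = (\<lambda>v. (v @ [(k - 1, True)], k)) ` V"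
  proof (intro set_eqI iffI)
    fix p assume "p \<in> boundary_doors k"
    then obtain w where p: "p = (w, k)" and w: "w \<in> rooms k" "w ! (k - 1) = (k - 1, True)"
      and facet: "k \<in> alternating_facets (chain_label w) {1..k}"
      unfolding boundary_doors_def by (auto simp: mem_doors_iff)
    define v where "v = take (k - 1) w"
    have "w \<in> signed_perms k" using w(1) unfolding rooms_def by simp
    then have len: "length v = k - 1" unfolding v_def signed_perms_def by simp
    have "w = v @ [w ! (k - 1)]"
      unfolding v_def using \<open>w \<in> signed_perms k\<close> assms by (rule signed_perms_butlast)
    then have w_eq: "w = v @ [(k - 1, True)]" using w(2) by simp
    have "v \<in> V"
      using \<open>w \<in> signed_perms k\<close> facet last_alternating_facet_iff[OF len assms]
        snoc_signed_perms_iff[OF assms] unfolding V_def w_eq by simp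
    then show "p \<in> (\<lambda>v. (v @ [(k - 1, True)], k)) ` V" unfolding p w_eq by blast
  next
    fix p assume "p \<in> (\<lambda>v. (v @ [(k - 1, True)], k)) ` V"
    then obtain v where p: "p = (v @ [(k - 1, True)], k)" and v: "v \<in> V" by blast
    then have len: "length v = k - 1" unfolding V_def signed_perms_def by simp
    have "v @ [(k - 1, True)] \<in> rooms k"
      using v snoc_signed_perms_iff[OF assms] unfolding V_def rooms_def by simp
    then show "p \<in> boundary_doors k"
      using v last_alternating_facet_iff[OF len assms] len unfolding p V_def
      by (simp add: boundary_doors_def mem_doors_iff nth_append)
  qed
  moreover have "inj_on (\<lambda>v. (v @ [(k - 1, True)], k)) V" by (auto simp: inj_on_def)
  ultimately show ?thesis unfolding full_alt_count_def V_def by (simp add: card_image)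
qed

lemma chain_labels_neg_word:
  assumes "w \<in> signed_perms k" "k \<le> n"
  shows "chain_labels (neg_word w) = uminus ` chain_labels w"
proof -
  have "chain_label (neg_word w) i = - chain_label w i" if "i \<in> {1..k}" for i
    using antipodal[OF signed_set_prefix_set[OF assms]] that
    by (simp add: chain_label_def prefix_set_neg_word)
  then show ?thesis
    unfolding chain_labels_conv[OF assms(1)] chain_labels_conv[OF neg_word_signed_perms[OF assms(1)]]
    by (auto simp: image_image intro!: image_cong)
qed

text \<open>Negating all signs matches the signed permutations outside the rooms with the rooms,
  negating the labels.\<close>
lemma card_non_rooms:
  assumes "1 \<le> k" "k \<le> n"
  shows "card {w \<in> signed_perms k. (k - 1, True) \<notin> set w \<and> P (chain_labels w)} =
    card {w \<in> rooms k. P (uminus ` chain_labels w)}"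
proof -
  define A where "A = {w \<in> signed_perms k. (k - 1, True) \<notin> set w \<and> P (chain_labels w)}"
  have "neg_word ` A = {w \<in> rooms k. P (uminus ` chain_labels w)}"
  proof (intro set_eqI iffI)
    fix v assume "v \<in> {w \<in> rooms k. P (uminus ` chain_labels w)}"
    then have v: "v \<in> signed_perms k" "(k - 1, True) \<in> set v" "P (uminus ` chain_labels v)"
      unfolding rooms_def by auto
    have "neg_word v \<in> signed_perms k" using neg_word_signed_perms[OF v(1)] .
    moreover have "(k - 1, True) \<notin> set (neg_word v)"
      using neg_word_in_rooms_iff[OF \<open>neg_word v \<in> signed_perms k\<close> assms(1)] v(1,2)
      by (simp add: rooms_def)
    moreover have "P (chain_labels (neg_word v))"
      using v(3) chain_labels_neg_word[OF v(1) assms(2)] by simp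
    ultimately have "neg_word v \<in> A" unfolding A_def by simp
    then show "v \<in> neg_word ` A" by (rule image_eqI[rotated]) simp
  qed (use neg_word_in_rooms_iff[OF _ assms(1)] chain_labels_neg_word[OF _ assms(2)] in
      \<open>auto simp: A_def image_image\<close>)
  moreover have "inj_on neg_word A" by (rule inj_onI) (metis neg_word_neg_word)
  ultimately show ?thesis unfolding A_def[symmetric] by (simp add: card_image[symmetric])
qed

lemma full_alt_count_rooms:
  assumes "1 \<le> k" "k \<le> n"
  shows "full_alt_count k = card {w\<in>rooms k. card (chain_labels w) = k \<and>
    (alternating (chain_labels w) \<or> alternating (uminus ` chain_labels w))}"
proof -
  define P where "P L \<longleftrightarrow> card L = k \<and> alternating L" for L
  define S where "S = {w\<in>rooms k. P (chain_labels w)}"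
  define T where "T = {w\<in>rooms k. P (uminus ` chain_labels w)}"
  have fin: "finite S" "finite T" "finite {w \<in> signed_perms k. (k - 1, True) \<notin> set w \<and> P (chain_labels w)}"
    unfolding S_def T_def rooms_def using finite_signed_perms by simp_all
  have "{w \<in> signed_perms k. P (chain_labels w)} =
      S \<union> {w \<in> signed_perms k. (k - 1, True) \<notin> set w \<and> P (chain_labels w)}"
    unfolding S_def rooms_def by auto
  then have "full_alt_count k = card S + card T"
    using card_Un_disjoint[OF fin(1,3)] card_non_rooms[OF assms, of P]
    unfolding full_alt_count_def P_def[symmetric] S_def T_def rooms_def by auto
  also have "\<dots> = card (S \<union> T)"
  proof (rule card_Un_disjoint[symmetric, OF fin(1,2)])
    show "S \<inter> T = {}"
    proof (intro equals0I)
      fix w assume "w \<in> S \<inter> T"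
      then have w: "w \<in> signed_perms k" "card (chain_labels w) = k"
        "alternating (chain_labels w)" "alternating (uminus ` chain_labels w)"
        unfolding S_def T_def P_def rooms_def by (auto simp: card_image)
      moreover have "finite (chain_labels w)" by (simp add: chain_labels_def)
      ultimately have "chain_labels w \<noteq> {}" "finite (chain_labels w)"
        using assms(1) by auto
      then show False
        using not_alternating_both_signs zero_notin_chain_labels[OF w(1) assms(2)] w(3,4) by blast
    qed
  qed
  also have "S \<union> T = {w\<in>rooms k. card (chain_labels w) = k \<and>
      (alternating (chain_labels w) \<or> alternating (uminus ` chain_labels w))}"
    unfolding S_def T_def P_def by (auto simp: card_image)
  finally show ?thesis .
qed

lemma odd_full_alt_count_step:
  assumes "1 \<le> k" "k \<le> n"
  shows "odd (full_alt_count k) \<longleftrightarrow> odd (full_alt_count (k - 1))"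
proof -
  have "boundary_doors k \<subseteq> doors k" unfolding boundary_doors_def by auto
  then have "card (doors k) = card (doors k - boundary_doors k) + card (boundary_doors k)"
    using finite_doors by (metis card_Diff_subset card_mono finite_subset le_add_diff_inverse2)
  then have "odd (card (doors k)) \<longleftrightarrow> odd (card (boundary_doors k))"
    using even_card_inner_doors[OF assms(1)] by simp
  then show ?thesis
    using odd_card_doors_iff_rooms[OF assms] full_alt_count_rooms[OF assms]
      card_boundary_doors[OF assms(1)] by simp
qed

lemma full_alt_count_0: "full_alt_count 0 = 1"
proof -
  have "signed_perms 0 = {[]}" "chain_labels [] = {}" "alternating {}"
    by (auto simp: signed_perms_def chain_labels_def alternating_def)
  then have "{w \<in> signed_perms 0. card (chain_labels w) = 0 \<and> alternating (chain_labels w)} = {[]}"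
    by auto
  then show ?thesis unfolding full_alt_count_def by simp
qed

lemma odd_full_alt_count: "k \<le> n \<Longrightarrow> odd (full_alt_count k)"
proof (induction k)
  case 0
  then show ?case by (simp add: full_alt_count_0)
next
  case (Suc k)
  then show ?case using odd_full_alt_count_step[of "Suc k"] by simp
qed


theorem tucker_bound: "n \<le> M"
proof -
  have "full_alt_count n \<noteq> 0" using odd_full_alt_count[of n] by (intro notI) simp
  then obtain w where w: "w \<in> signed_perms n" "card (chain_labels w) = n"
    unfolding full_alt_count_def by (auto simp: card_eq_0_iff)
  have "abs ` chain_labels w \<subseteq> {1..int M}"
  proof
    fix a assume "a \<in> abs ` chain_labels w"
    then obtain i where i: "i \<in> {1..n}" "a = \<bar>lam (prefix_set w i)\<bar>"
      unfolding chain_labels_conv[OF w(1)] chain_label_def by auto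
    have "signed_set n (prefix_set w i)" using signed_set_prefix_set[OF w(1) order_refl] i by simp
    then show "a \<in> {1..int M}" using i nonzero bounded by fastforce
  qed
  then have "card (abs ` chain_labels w) \<le> card {1..int M}" by (intro card_mono) auto
  moreover have "card (abs ` chain_labels w) = n"
    using w(2) inj_on_abs_chain_labels[OF w(1) order_refl] by (simp add: card_image)
  ultimately show ?thesis by simp
qed

end

lemma tucker_lemma:
  assumes "\<And>x. signed_set n x \<Longrightarrow> lam (neg_signs x) = - lam x"
    and "\<And>x. signed_set n x \<Longrightarrow> lam x \<noteq> 0"
    and "\<And>x. signed_set n x \<Longrightarrow> \<bar>lam x\<bar> \<le> int M"
    and "\<And>x y. signed_set n x \<Longrightarrow> signed_set n y \<Longrightarrow> x \<subseteq> y \<Longrightarrow> lam x \<noteq> - lam y"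
  shows "n \<le> M"
proof -
  interpret tucker_labelling n M lam using assms by unfold_locales
  show ?thesis by (rule tucker_bound)
qed

section \<open>Kneser's conjecture\<close>

definition colour :: "(nat \<Rightarrow> nat set set) \<Rightarrow> nat \<Rightarrow> nat set \<Rightarrow> nat" where
  "colour G m Z = (if \<exists>j<m. Z \<in> G j then Suc (GREATEST j. j < m \<and> Z \<in> G j) else 0)"

lemma colour_SucD:
  assumes "colour G m Z = Suc j"
  shows "j < m \<and> Z \<in> G j"
proof -
  have ex: "\<exists>j<m. Z \<in> G j" using assms unfolding colour_def by (auto split: if_splits)
  then obtain j0 where "j0 < m" "Z \<in> G j0" by blast
  then have "(GREATEST j. j < m \<and> Z \<in> G j) < m \<and> Z \<in> G (GREATEST j. j < m \<and> Z \<in> G j)"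
    by (intro GreatestI_nat[where P = "\<lambda>j. j < m \<and> Z \<in> G j" and k = j0 and b = m]) auto
  moreover have "j = (GREATEST j. j < m \<and> Z \<in> G j)" using assms ex unfolding colour_def by simp
  ultimately show ?thesis by simp
qed

lemma colour_le: "colour G m Z \<le> m"
proof (cases "colour G m Z")
  case (Suc j)
  then show ?thesis using colour_SucD[OF Suc] by simp
qed simp

lemma colour_pos: "j < m \<Longrightarrow> Z \<in> G j \<Longrightarrow> 1 \<le> colour G m Z"
  unfolding colour_def by auto

text \<open>Matousek's labelling, turning a colouring of the Kneser graph into a Tucker labelling.\<close>
definition kneser_label :: "(nat \<Rightarrow> nat set set) \<Rightarrow> nat \<Rightarrow> nat \<Rightarrow> (nat \<times> bool) set \<Rightarrow> int" where
  "kneser_label G m k x = (if card x \<le> 2 * k - 2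
     then (if (LEAST i. i \<in> fst ` x, True) \<in> x then 1 else -1) * int (card x)
     else (if colour G m (neg_part x) < colour G m (pos_part x) then 1 else -1)
            * int (2 * k - 2 + max (colour G m (pos_part x)) (colour G m (neg_part x))))"

locale kneser_cover =
  fixes n m k :: nat and G :: "nat \<Rightarrow> nat set set"
  assumes k: "1 \<le> k"
    and up_closed: "\<And>j A B. j < m \<Longrightarrow> A \<in> G j \<Longrightarrow> A \<subseteq> B \<Longrightarrow> B \<subseteq> {..<n} \<Longrightarrow> B \<in> G j"
    and intersecting: "\<And>j A B. j < m \<Longrightarrow> A \<in> G j \<Longrightarrow> B \<in> G j \<Longrightarrow> A \<inter> B \<noteq> {}"
    and covering: "\<And>A. A \<subseteq> {..<n} \<Longrightarrow> card A = k \<Longrightarrow> \<exists>j<m. A \<in> G j"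
begin

abbreviation (input) col :: "nat set \<Rightarrow> nat" where
  "col \<equiv> colour G m"

abbreviation (input) lab :: "(nat \<times> bool) set \<Rightarrow> int" where
  "lab \<equiv> kneser_label G m k"

lemma colour_pos_if_large:
  assumes "Z \<subseteq> {..<n}" "k \<le> card Z"
  shows "1 \<le> col Z"
proof -
  obtain A where A: "A \<subseteq> Z" "card A = k"
    using obtain_subset_with_card_n[OF assms(2)] by blast
  then obtain j where j: "j < m" "A \<in> G j" using covering[of A] assms(1) by auto
  then show ?thesis using up_closed[OF j A(1) assms(1)] colour_pos by blast
qed

lemma disjoint_colours_differ:
  assumes "A \<inter> B = {}" "1 \<le> col A"
  shows "col A \<noteq> col B"
proof
  assume eq: "col A = col B"
  obtain j where "col A = Suc j" using assms(2) by (cases "col A") auto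
  then have "j < m" "A \<in> G j" "B \<in> G j" using colour_SucD eq by metis+
  then show False using intersecting assms(1) by blast
qed

lemma large_signed_set_colours:
  assumes "signed_set n x" "\<not> card x \<le> 2 * k - 2"
  shows "col (pos_part x) \<noteq> col (neg_part x) \<and> 1 \<le> max (col (pos_part x)) (col (neg_part x))"
proof -
  note split = signed_set_card_split[OF assms(1)]
  have "k \<le> card (pos_part x) \<or> k \<le> card (neg_part x)" using split(1) assms(2) by linarith
  then have "1 \<le> max (col (pos_part x)) (col (neg_part x))"
    using colour_pos_if_large split(3,4) by (meson le_max_iff_disj)
  moreover have "col (pos_part x) \<noteq> col (neg_part x)"
  proof (cases "1 \<le> col (pos_part x)")
    case True
    then show ?thesis using disjoint_colours_differ split(2) by blast
  next
    case False
    then have "1 \<le> col (neg_part x)" using calculation by simp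
    moreover have "neg_part x \<inter> pos_part x = {}" using split(2) by blast
    ultimately show ?thesis using disjoint_colours_differ[of "neg_part x" "pos_part x"] by simp
  qed
  ultimately show ?thesis by simp
qed

lemma abs_kneser_label:
  "\<bar>lab x\<bar> = (if card x \<le> 2 * k - 2 then int (card x)
     else int (2 * k - 2 + max (col (pos_part x)) (col (neg_part x))))"
  unfolding kneser_label_def by simp

lemma kneser_label_antipodal:
  assumes "signed_set n x"
  shows "lab (neg_signs x) = - lab x"
proof (cases "card x \<le> 2 * k - 2")
  case True
  define i0 where "i0 = (LEAST i. i \<in> fst ` x)"
  have "fst ` x \<noteq> {}" using assms unfolding signed_set_def by simp
  then have "i0 \<in> fst ` x" unfolding i0_def by (metis LeastI_ex all_not_in_conv)
  then obtain b where "(i0, b) \<in> x" by force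
  then have "(i0, True) \<in> x \<or> (i0, False) \<in> x" by (cases b) auto
  moreover have "\<not> ((i0, True) \<in> x \<and> (i0, False) \<in> x)" using assms unfolding signed_set_def by blast
  ultimately have "(i0, True) \<in> neg_signs x \<longleftrightarrow> (i0, True) \<notin> x" unfolding mem_neg_signs by auto
  then show ?thesis unfolding kneser_label_def using True by (simp add: i0_def)
next
  case False
  then show ?thesis
    using large_signed_set_colours[OF assms False]
    unfolding kneser_label_def by (auto simp: max.commute)
qed

lemma kneser_label_nonzero:
  assumes "signed_set n x"
  shows "lab x \<noteq> 0"
proof -
  have "card x \<noteq> 0" using assms signed_set_finite[OF assms] unfolding signed_set_def by simp
  then have "\<bar>lab x\<bar> \<noteq> 0"
    using large_signed_set_colours[OF assms] unfolding abs_kneser_label by auto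
  then show ?thesis by auto
qed

lemma kneser_label_bounded: "\<bar>lab x\<bar> \<le> int (2 * k - 2 + m)"
  unfolding abs_kneser_label using colour_le[of G m] by (auto simp: max_def)

text \<open>Opposite labels of equal absolute value on large sets \<open>x \<subseteq> y\<close> would put a half of \<open>x\<close>
  and the opposite half of \<open>y\<close> into the same intersecting class.\<close>
lemma large_no_complementary_edge:
  assumes "signed_set n x" "signed_set n y" "x \<subseteq> y"
    and "\<not> card x \<le> 2 * k - 2" "\<not> card y \<le> 2 * k - 2"
  shows "lab x \<noteq> - lab y"
proof
  assume opp: "lab x = - lab y"
  note lx = large_signed_set_colours[OF assms(1,4)] and ly = large_signed_set_colours[OF assms(2,5)]
  have "\<bar>lab x\<bar> = \<bar>lab y\<bar>" using opp by simp
  then have meq: "max (col (pos_part x)) (col (neg_part x)) = max (col (pos_part y)) (col (neg_part y))"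
    using assms(4,5) by (simp add: abs_kneser_label)
  have sign: "col (neg_part x) < col (pos_part x) \<longleftrightarrow> \<not> col (neg_part y) < col (pos_part y)"
    using opp lx meq assms(4,5) unfolding kneser_label_def by (auto split: if_splits)
  consider "col (pos_part x) = col (neg_part y)" "1 \<le> col (pos_part x)"
    | "col (neg_part x) = col (pos_part y)" "1 \<le> col (neg_part x)"
  proof (cases "col (neg_part x) < col (pos_part x)")
    case True
    then have "col (pos_part y) < col (neg_part y)" using sign ly by auto
    then show thesis using that(1) True meq lx by (simp add: max_def)
  next
    case False
    then have "col (pos_part x) < col (neg_part x)" "col (neg_part y) < col (pos_part y)"
      using sign lx by auto
    then show thesis using that(2) meq lx by (simp add: max_def)
  qed
  moreover have "pos_part x \<inter> neg_part y = {}" "neg_part x \<inter> pos_part y = {}"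
    using assms(3) signed_set_card_split(2)[OF assms(2)]
    unfolding pos_part_def neg_part_def by auto
  ultimately show False using disjoint_colours_differ by metis
qed

lemma kneser_label_no_complementary_edge:
  assumes "signed_set n x" "signed_set n y" "x \<subseteq> y"
  shows "lab x \<noteq> - lab y"
proof (cases "card y \<le> 2 * k - 2")
  case True
  show ?thesis
  proof
    assume opp: "lab x = - lab y"
    have "card x \<le> card y" using card_mono[OF signed_set_finite[OF assms(2)] assms(3)] .
    moreover have "\<bar>lab x\<bar> = \<bar>lab y\<bar>" using opp by simp
    ultimately have "card x = card y" using True by (simp add: abs_kneser_label)
    then have "x = y" using card_subset_eq[OF signed_set_finite[OF assms(2)] assms(3)] by simp
    then show False using opp kneser_label_nonzero[OF assms(1)] by simp
  qed
next
  case y: False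
  show ?thesis
  proof (cases "card x \<le> 2 * k - 2")
    case True
    then have "\<bar>lab x\<bar> < \<bar>lab y\<bar>"
      using large_signed_set_colours[OF assms(2) y] y unfolding abs_kneser_label by simp
    then show ?thesis by auto
  qed (rule large_no_complementary_edge[OF assms _ y])
qed

theorem kneser_cover_bound_nat: "n + 2 \<le> 2 * k + m"
proof -
  have "n \<le> 2 * k - 2 + m"
    using kneser_label_antipodal kneser_label_nonzero kneser_label_bounded
      kneser_label_no_complementary_edge
    by (rule tucker_lemma)
  then show ?thesis using k by simp
qed

end

text \<open>Lovasz's theorem: the Kneser graph of the \<open>k\<close>-subsets of \<open>V\<close> needs at least
  \<open>card V - 2k + 2\<close> colours; a colour class is an intersecting family, closed upwards for
  convenience.\<close>
theorem kneser_cover_bound: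
  fixes V :: "'a set" and S :: "'b set" and F :: "'b \<Rightarrow> 'a set set"
  assumes "finite V" "finite S" "1 \<le> k"
    and up_closed: "\<And>s A B. s \<in> S \<Longrightarrow> A \<in> F s \<Longrightarrow> A \<subseteq> B \<Longrightarrow> B \<subseteq> V \<Longrightarrow> B \<in> F s"
    and intersecting: "\<And>s A B. s \<in> S \<Longrightarrow> A \<in> F s \<Longrightarrow> B \<in> F s \<Longrightarrow> A \<inter> B \<noteq> {}"
    and covering: "\<And>A. A \<subseteq> V \<Longrightarrow> card A = k \<Longrightarrow> \<exists>s\<in>S. A \<in> F s"
  shows "card V + 2 \<le> 2 * k + card S"
proof -
  obtain e where e: "bij_betw e {..<card V} V"
    using ex_bij_betw_nat_finite[OF assms(1)] by (auto simp: atLeast0LessThan)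
  obtain t where t: "bij_betw t {..<card S} S"
    using ex_bij_betw_nat_finite[OF assms(2)] by (auto simp: atLeast0LessThan)
  have e_inj: "inj_on e {..<card V}" and e_sub: "\<And>A. A \<subseteq> {..<card V} \<Longrightarrow> e ` A \<subseteq> V"
    using e by (auto simp: bij_betw_def)
  have t_in: "\<And>j. j < card S \<Longrightarrow> t j \<in> S" and t_onto: "t ` {..<card S} = S"
    using t by (auto simp: bij_betw_def)
  define G where "G j = {A. A \<subseteq> {..<card V} \<and> e ` A \<in> F (t j)}" for j
  interpret kneser_cover "card V" "card S" k G
  proof
    fix j A B assume j: "j < card S" and A: "A \<in> G j" and AB: "A \<subseteq> B" and B: "B \<subseteq> {..<card V}"
    have "e ` B \<in> F (t j)"
      using up_closed[OF t_in[OF j] _ image_mono[OF AB] e_sub[OF B]] A unfolding G_def by simp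
    then show "B \<in> G j" using B unfolding G_def by simp
  next
    fix j A B assume j: "j < card S" and A: "A \<in> G j" and B: "B \<in> G j"
    have "e ` A \<inter> e ` B \<noteq> {}" using intersecting[OF t_in[OF j]] A B unfolding G_def by simp
    moreover have "e ` A \<inter> e ` B = e ` (A \<inter> B)"
      using inj_on_image_Int[OF e_inj] A B unfolding G_def by simp
    ultimately show "A \<inter> B \<noteq> {}" by auto
  next
    fix A assume A: "A \<subseteq> {..<card V}" "card A = k"
    then have "card (e ` A) = k" using card_image[OF inj_on_subset[OF e_inj A(1)]] by simp
    then obtain s where s: "s \<in> S" "e ` A \<in> F s" using covering e_sub[OF A(1)] by blast
    then obtain j where "j < card S" "s = t j" using t_onto by force
    then show "\<exists>j<card S. A \<in> G j" using A(1) s(2) unfolding G_def by blast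
  qed (rule assms(3))
  show ?thesis by (rule kneser_cover_bound_nat)
qed

section \<open>Weak epsilon-nets in convexity spaces\<close>

lemma conv_hull_mono: "A \<subseteq> B \<Longrightarrow> conv_hull C A \<subseteq> conv_hull C B"
  unfolding conv_hull_def by auto

lemma subset_conv_hull: "A \<subseteq> conv_hull C A"
  unfolding conv_hull_def by auto

lemma conv_hull_in:
  assumes "convexity_space X C" "A \<subseteq> X"
  shows "conv_hull C A \<in> C"
proof -
  have "{c \<in> C. A \<subseteq> c} \<subseteq> C" "X \<in> {c \<in> C. A \<subseteq> c}"
    using assms unfolding convexity_space_def by auto
  then show ?thesis using assms(1) unfolding convexity_space_def conv_hull_def by blast
qed

lemma radon_shatters_disjoint:
  assumes "radon_shatters C Y" "A \<subseteq> Y"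
  shows "conv_hull C A \<inter> conv_hull C (Y - A) = {}"
proof -
  have "A \<union> (Y - A) = Y" "A \<inter> (Y - A) = {}" using assms(2) by auto
  then show ?thesis using assms(1) unfolding radon_shatters_def by blast
qed

lemma radon_shatters_conv_hull_Int:
  assumes "radon_shatters C Y" "A \<subseteq> Y"
  shows "conv_hull C A \<inter> Y = A"
  using radon_shatters_disjoint[OF assms] subset_conv_hull[of A C] subset_conv_hull[of "Y - A" C]
    assms(2) by blast


lemma card_weak_eps_net_ge:
  assumes "convexity_space X C" "\<epsilon> > 0"
    and Y: "Y \<subseteq> X" "finite Y" "card Y = r" "r > 0" "radon_shatters C Y"
    and measure: "\<And>c. c \<in> C \<Longrightarrow> measure M c = real (card (Y \<inter> c)) / real r"
    and net: "weak_eps_net C M \<epsilon> S" "finite S"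
  shows "(1 - 2 * \<epsilon>) * real r \<le> real (card S)"
proof -
  define k where "k = nat \<lceil>\<epsilon> * real r\<rceil>"
  have "\<epsilon> * real r > 0" using assms(2) Y(4) by simp
  then have k: "1 \<le> k" "\<epsilon> * real r \<le> real k" "real k < \<epsilon> * real r + 1"
    unfolding k_def by linarith+
  have "card Y + 2 \<le> 2 * k + card S"
  proof (rule kneser_cover_bound[OF Y(2) net(2) k(1), where F = "\<lambda>s. {A. A \<subseteq> Y \<and> s \<in> conv_hull C A}"])
    fix s A B assume "A \<in> {A. A \<subseteq> Y \<and> s \<in> conv_hull C A}" "A \<subseteq> B" "B \<subseteq> Y"
    then show "B \<in> {A. A \<subseteq> Y \<and> s \<in> conv_hull C A}" using conv_hull_mono by blast
  next
    fix s A B assume "A \<in> {A. A \<subseteq> Y \<and> s \<in> conv_hull C A}" "B \<in> {A. A \<subseteq> Y \<and> s \<in> conv_hull C A}"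
    then show "A \<inter> B \<noteq> {}"
      using radon_shatters_disjoint[OF Y(5), of A] conv_hull_mono[of B "Y - A" C] by blast
  next
    fix A assume A: "A \<subseteq> Y" "card A = k"
    have "conv_hull C A \<in> C" using conv_hull_in[OF assms(1)] A(1) Y(1) by blast
    moreover have "measure M (conv_hull C A) = real k / real r"
      using measure[OF calculation] radon_shatters_conv_hull_Int[OF Y(5) A(1)] A(2)
      by (simp add: Int_commute)
    moreover have "\<epsilon> \<le> real k / real r" using k(2) Y(4) by (simp add: pos_le_divide_eq)
    ultimately have "S \<inter> conv_hull C A \<noteq> {}" using net(1) unfolding weak_eps_net_def by simp
    then obtain s where "s \<in> S" "s \<in> conv_hull C A" by blast
    then show "\<exists>s\<in>S. A \<in> {A. A \<subseteq> Y \<and> s \<in> conv_hull C A}" using A(1) by blast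
  qed
  then show ?thesis using k(3) Y(3) by (simp add: algebra_simps)
qed

lemma uniform_measure_on_subset:
  assumes "finite Y" "Y \<noteq> {}" "Y \<subseteq> X"
  shows "\<exists>M. prob_space M \<and> space M = X \<and> sets M = Pow X \<and>
    (\<forall>c. c \<subseteq> X \<longrightarrow> measure M c = real (card (Y \<inter> c)) / real (card Y))"
proof (intro exI conjI allI impI)
  let ?p = "measure_pmf (pmf_of_set Y)"
  let ?M = "restrict_space ?p X"
  have "emeasure ?p X = 1"
    using assms by (simp add: emeasure_pmf_of_set Int_absorb2)
  then show "prob_space ?M" by (intro prob_space_restrict_space) simp_all
  show "space ?M = X" by (simp add: space_restrict_space)
  show "sets ?M = Pow X" by (auto simp: sets_restrict_space)
  fix c assume "c \<subseteq> X"
  then have "measure ?M c = measure ?p c" by (intro measure_restrict_space) simp_all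
  then show "measure ?M c = real (card (Y \<inter> c)) / real (card Y)"
    using assms by (simp add: measure_pmf_of_set)
qed

lemma radon_shattered_subset_of_card:
  assumes "radon_number X C > enat r"
  obtains Y where "Y \<subseteq> X" "finite Y" "card Y = r" "radon_shatters C Y"
proof -
  have "\<exists>Y. Y \<subseteq> X \<and> finite Y \<and> card Y = r \<and> radon_shatters C Y"
  proof (rule ccontr)
    assume "\<nexists>Y. Y \<subseteq> X \<and> finite Y \<and> card Y = r \<and> radon_shatters C Y"
    then have "radon_number X C \<le> enat r" unfolding radon_number_def by (blast intro: Inf_lower)
    then show False using assms by simp
  qed
  then show ?thesis using that by blast
qed

theorem lemma2:
  fixes X :: "'a set" and C :: "'a set set" and \<epsilon> :: real and r :: nat
  assumes "convexity_space X C" and "\<epsilon> > 0" and "r > 0"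
    and "radon_number X C > enat r"
  shows "\<exists>M. prob_space M \<and> space M = X \<and> C \<subseteq> sets M \<and>
           (\<forall>S. S \<subseteq> X \<and> weak_eps_net C M \<epsilon> S \<longrightarrow>
                 infinite S \<or> real (card S) \<ge> (1 - 2 * \<epsilon>) * real r)"
proof -
  obtain Y where Y: "Y \<subseteq> X" "finite Y" "card Y = r" "radon_shatters C Y"
    using radon_shattered_subset_of_card[OF assms(4)] by blast
  have "Y \<noteq> {}" using Y(3) assms(3) by auto
  then obtain M where M: "prob_space M" "space M = X" "sets M = Pow X"
    and measure: "\<And>c. c \<subseteq> X \<Longrightarrow> measure M c = real (card (Y \<inter> c)) / real r"
    using uniform_measure_on_subset[OF Y(2) _ Y(1)] Y(3) by blast
  have "C \<subseteq> Pow X" using assms(1) unfolding convexity_space_def by blast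
  then have "(1 - 2 * \<epsilon>) * real r \<le> real (card S)" if "weak_eps_net C M \<epsilon> S" "finite S" for S
    using card_weak_eps_net_ge[OF assms(1,2) Y(1-3) assms(3) Y(4) _ that] measure by blast
  then show ?thesis using M \<open>C \<subseteq> Pow X\<close> by (intro exI[of _ M]) auto
qed

end
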